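(* Let $C$ be a constant and $h>0$. On the grid $x_j=x_0+jh$, $j\in\mathbb Z$, consider the linear semidiscrete wave system $$\dot v_j=w_j,\qquad \dot w_j=\frac{v_{j+1}-2v_j+v_{j-1}}{h^2}-Cv_j,\qquad j\in\mathbb Z.$$ Then for every $k=0,1,2,\dots$ the functional $$R_k=\sum_j w_j\,\big(D_0 (D_-D_+)^k v\big)_j\,h=-\sum_j v_j\,\big(D_0 (D_-D_+)^k w\big)_j\,h$$ is conserved along solutions. Moreover, if $\alpha(t,x)$ satisfies $$\alpha_{tt}(t,x)=\frac{\alpha(t,x+h)-2\alpha(t,x)+\alpha(t,x-h)}{h^2}-C\alpha(t,x),$$ then the functional $T=\sum_j\big(\alpha(t,x_j)w_j-\alpha_t(t,x_j)v_j\big)h$ is conserved along solutions.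
   Context: $S_\pm u_j=u_{j\pm1}$, $D_+=(S_+-1)/h$, $D_-=(1-S_-)/h$, $D_0=(S_+-S_-)/(2h)$. Solutions are assumed to decay sufficiently fast as $|j|\to\infty$ for all sums to make sense. *)

theory Defs
  imports "HOL-Analysis.Analysis"
begin

definition Dp :: "real \<Rightarrow> (int \<Rightarrow> real) \<Rightarrow> (int \<Rightarrow> real)" where
  "Dp h u = (\<lambda>j. (u (j + 1) - u j) / h)"

definition Dm :: "real \<Rightarrow> (int \<Rightarrow> real) \<Rightarrow> (int \<Rightarrow> real)" where
  "Dm h u = (\<lambda>j. (u j - u (j - 1)) / h)"

definition D0 :: "real \<Rightarrow> (int \<Rightarrow> real) \<Rightarrow> (int \<Rightarrow> real)" where
  "D0 h u = (\<lambda>j. (u (j + 1) - u (j - 1)) / (2 * h))"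

definition D0DDk :: "real \<Rightarrow> nat \<Rightarrow> (int \<Rightarrow> real) \<Rightarrow> (int \<Rightarrow> real)" where
  "D0DDk h k u = D0 h (((Dm h \<circ> Dp h) ^^ k) u)"

definition is_sd_wave_solution ::
    "real \<Rightarrow> real \<Rightarrow> (real \<Rightarrow> int \<Rightarrow> real) \<Rightarrow> (real \<Rightarrow> int \<Rightarrow> real) \<Rightarrow> bool" where
  "is_sd_wave_solution h C v w \<longleftrightarrow>
     (\<forall>t j. ((\<lambda>s. v s j) has_real_derivative w t j) (at t)) \<and>
     (\<forall>t j. ((\<lambda>s. w s j) has_real_derivative
              ((v t (j + 1) - 2 * v t j + v t (j - 1)) / h\<^sup>2 - C * v t j)) (at t))"

definition sd_decay :: "(real \<Rightarrow> int \<Rightarrow> real) \<Rightarrow> (real \<Rightarrow> int \<Rightarrow> real) \<Rightarrow> bool" where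
  "sd_decay v w \<longleftrightarrow>
     (\<forall>a b. \<exists>B. B summable_on (UNIV :: int set) \<and>
        (\<forall>t\<in>{a..b}. \<forall>j. \<bar>v t j\<bar> \<le> B j \<and> \<bar>w t j\<bar> \<le> B j))"

end

theory Submission
  imports Defs
begin

text \<open>Both conservation laws come from summation by parts on \<open>\<ell>\<^sup>1(\<int>)\<close>. Write
  \<open>L = D\<^sub>-D\<^sub>+\<close> and \<open>A = D\<^sub>0 L\<^sup>k\<close>. Along a solution
  \<open>d/dt R\<^sub>k = \<langle>L v - C v, A v\<rangle> + \<langle>A w, w\<rangle>\<close>; since \<open>D\<^sub>0\<close> is antisymmetric, \<open>L\<close> is symmetric and
  the two commute, both \<open>A\<close> and \<open>A L\<close> are antisymmetric, so every term vanishes. For \<open>T\<close>, the two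
  wave equations reduce the time derivative of the \<open>j\<close>-th summand to
  \<open>\<alpha>\<^sub>j (L v)\<^sub>j - (L \<alpha>)\<^sub>j v\<^sub>j\<close>, which by the discrete Lagrange identity is a difference of
  consecutive Casoratians of \<open>\<alpha>\<close> and \<open>v\<close> and telescopes. Differentiation under the sum is
  justified by an \<open>\<ell>\<^sup>1\<close> bound on the derivatives that is uniform on bounded time intervals.\<close>

section \<open>Summable families\<close>

lemma summable_on_diff:
  fixes f g :: "'a \<Rightarrow> 'b::topological_ab_group_add"
  assumes "f summable_on A" "g summable_on A"
  shows "(\<lambda>x. f x - g x) summable_on A"
  using summable_on_add[OF assms(1) summable_on_uminus[THEN iffD2, OF assms(2)]] by simp

lemma infsum_diff:
  fixes f g :: "'a \<Rightarrow> 'b::{topological_ab_group_add, t2_space}"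
  assumes "f summable_on A" "g summable_on A"
  shows "(\<Sum>\<^sub>\<infinity>x\<in>A. f x - g x) = infsum f A - infsum g A"
  using infsum_add[OF assms(1) summable_on_uminus[THEN iffD2, OF assms(2)]]
  by (simp add: infsum_uminus)

lemma summable_on_divide_const:
  fixes f :: "'a \<Rightarrow> 'b::{t2_space, topological_semigroup_mult, division_ring}"
  assumes "f summable_on A"
  shows "(\<lambda>x. f x / c) summable_on A"
  using summable_on_cmult_left[OF assms, of "inverse c"] by (simp add: divide_inverse)

lemma infsum_divide_const:
  fixes f :: "'a \<Rightarrow> 'b::{t2_space, topological_semigroup_mult, division_ring}"
  shows "(\<Sum>\<^sub>\<infinity>x\<in>A. f x / c) = infsum f A / c"
  using infsum_cmult_left'[of f "inverse c" A] by (simp add: divide_inverse)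

lemma summable_on_int_shift:
  "u summable_on UNIV \<Longrightarrow> (\<lambda>j::int. u (j + c)) summable_on UNIV"
  by (subst summable_on_reindex_bij_witness[of UNIV "\<lambda>j. j - c" "\<lambda>j. j + c" UNIV u]) auto

lemma infsum_int_shift: "(\<Sum>\<^sub>\<infinity>j::int. u (j + c)) = (\<Sum>\<^sub>\<infinity>j. u j)"
  by (rule infsum_reindex_bij_witness[of UNIV "\<lambda>j. j - c" "\<lambda>j. j + c"]) auto

lemma infsum_int_telescope:
  fixes P :: "int \<Rightarrow> 'b::{topological_ab_group_add, t2_space}"
  assumes "P summable_on UNIV"
  shows "(\<Sum>\<^sub>\<infinity>j::int. P j - P (j - 1)) = 0"
  using infsum_diff[OF assms summable_on_int_shift[OF assms, of "-1", simplified]]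
    infsum_int_shift[of P "-1"]
  by simp

lemma summable_on_abs:
  fixes u :: "'a \<Rightarrow> real"
  shows "u summable_on A \<Longrightarrow> (\<lambda>x. \<bar>u x\<bar>) summable_on A"
  using summable_on_iff_abs_summable_on_real by auto

lemma summable_on_dominated:
  fixes u M :: "'a \<Rightarrow> real"
  assumes "M summable_on A" "\<And>x. x \<in> A \<Longrightarrow> \<bar>u x\<bar> \<le> M x"
  shows "u summable_on A"
proof -
  have "(\<lambda>x. \<bar>u x\<bar>) summable_on A"
    by (rule summable_on_comparison_test[OF assms(1)]) (use assms(2) in auto)
  then show ?thesis
    using summable_on_iff_abs_summable_on_real by auto
qed

lemma abs_le_infsum_abs:
  fixes u :: "'a \<Rightarrow> real"
  assumes "u summable_on A" "x \<in> A"
  shows "\<bar>u x\<bar> \<le> (\<Sum>\<^sub>\<infinity>y\<in>A. \<bar>u y\<bar>)"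
proof -
  note abs = summable_on_abs[OF assms(1)]
  have "(\<Sum>\<^sub>\<infinity>y\<in>{x}. \<bar>u y\<bar>) \<le> (\<Sum>\<^sub>\<infinity>y\<in>A. \<bar>u y\<bar>)"
    by (rule infsum_mono2[OF summable_on_subset[OF abs] abs]) (use assms(2) in auto)
  then show ?thesis by simp
qed

lemma summable_on_mult_bounded:
  fixes u z :: "'a \<Rightarrow> real"
  assumes "u summable_on A" "\<And>x. x \<in> A \<Longrightarrow> \<bar>z x\<bar> \<le> K"
  shows "(\<lambda>x. z x * u x) summable_on A"
proof (rule summable_on_dominated)
  show "(\<lambda>x. K * \<bar>u x\<bar>) summable_on A"
    using summable_on_cmult_right[OF summable_on_abs[OF assms(1)]] .
  show "\<bar>z x * u x\<bar> \<le> K * \<bar>u x\<bar>" if "x \<in> A" for x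
    unfolding abs_mult using assms(2)[OF that] by (simp add: mult_right_mono)
qed

lemma summable_on_mult:
  fixes u z :: "'a \<Rightarrow> real"
  assumes "u summable_on A" "z summable_on A"
  shows "(\<lambda>x. z x * u x) summable_on A"
  using summable_on_mult_bounded[OF assms(1) abs_le_infsum_abs[OF assms(2)]] .

section \<open>Differentiating a series termwise\<close>

lemma has_real_derivative_infsum:
  fixes f f' :: "'i \<Rightarrow> real \<Rightarrow> real"
  assumes I: "countable I" "infinite I" and "r > 0"
    and deriv: "\<And>i s. i \<in> I \<Longrightarrow> s \<in> ball t r \<Longrightarrow> ((\<lambda>s. f i s) has_real_derivative f' i s) (at s)"
    and summable: "\<And>s. s \<in> ball t r \<Longrightarrow> (\<lambda>i. f i s) summable_on I"
    and M: "M summable_on I" "\<And>i s. i \<in> I \<Longrightarrow> s \<in> ball t r \<Longrightarrow> \<bar>f' i s\<bar> \<le> M i"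
  shows "((\<lambda>s. \<Sum>\<^sub>\<infinity>i\<in>I. f i s) has_real_derivative (\<Sum>\<^sub>\<infinity>i\<in>I. f' i t)) (at t)"
proof -
  define e where "e = from_nat_into I"
  have bij: "bij_betw e UNIV I"
    unfolding e_def using bij_betw_from_nat_into[OF I] .
  have e_in: "e n \<in> I" for n
    using bij by (auto simp: bij_betw_def)
  have series: "(\<Sum>\<^sub>\<infinity>i\<in>I. g i) = (\<Sum>n. g (e n))" "summable (\<lambda>n. g (e n))"
    if "g summable_on I" for g :: "'i \<Rightarrow> real"
  proof -
    have "(\<lambda>n. g (e n)) summable_on UNIV"
      using summable_on_reindex_bij_betw[OF bij, of g] that by simp
    then have "(\<lambda>n. g (e n)) sums (\<Sum>\<^sub>\<infinity>n. g (e n))"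
      by (intro has_sum_imp_sums has_sum_infsum)
    then show "summable (\<lambda>n. g (e n))" "(\<Sum>\<^sub>\<infinity>i\<in>I. g i) = (\<Sum>n. g (e n))"
      using infsum_reindex_bij_betw[OF bij, of g] by (auto simp: sums_iff)
  qed
  have f'_summable: "(\<lambda>i. f' i s) summable_on I" if "s \<in> ball t r" for s
    by (rule summable_on_dominated[OF M(1)]) (use M(2) that in auto)
  have series_deriv: "((\<lambda>s. \<Sum>n. f (e n) s) has_real_derivative (\<Sum>n. f' (e n) t)) (at t)"
  proof (rule has_field_derivative_series'(2)[where S="ball t r" and x0=t])
    show "((\<lambda>s. f (e n) s) has_real_derivative f' (e n) s) (at s within ball t r)"
      if "s \<in> ball t r" for n s
      using deriv[OF e_in that] by (rule has_field_derivative_at_within)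
    show "uniformly_convergent_on (ball t r) (\<lambda>n s. \<Sum>i<n. f' (e i) s)"
    proof (rule Weierstrass_m_test'[where M="\<lambda>n. M (e n)"])
      show "norm (f' (e n) s) \<le> M (e n)" if "s \<in> ball t r" for n s
        using M(2)[OF e_in that] by simp
    qed (rule series(2)[OF M(1)])
    show "summable (\<lambda>n. f (e n) t)"
      using series(2)[OF summable] \<open>r > 0\<close> by simp
  qed (use \<open>r > 0\<close> in simp_all)
  have f'_series: "(\<Sum>\<^sub>\<infinity>i\<in>I. f' i t) = (\<Sum>n. f' (e n) t)"
    using series(1)[OF f'_summable] \<open>r > 0\<close> by simp
  show ?thesis
    unfolding f'_series
    by (rule has_field_derivative_transform_within_open[OF series_deriv, of "ball t r"])
      (use \<open>r > 0\<close> series(1)[OF summable] in auto)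
qed

lemma infsum_const_if_derivative_infsum_zero:
  fixes f f' :: "'i \<Rightarrow> real \<Rightarrow> real"
  assumes I: "countable I" "infinite I"
    and deriv: "\<And>i s. i \<in> I \<Longrightarrow> ((\<lambda>s. f i s) has_real_derivative f' i s) (at s)"
    and summable: "\<And>s. (\<lambda>i. f i s) summable_on I"
    and dominated: "\<And>a b. \<exists>M. M summable_on I \<and> (\<forall>s\<in>{a..b}. \<forall>i\<in>I. \<bar>f' i s\<bar> \<le> M i)"
    and zero: "\<And>s. (\<Sum>\<^sub>\<infinity>i\<in>I. f' i s) = 0"
  shows "(\<Sum>\<^sub>\<infinity>i\<in>I. f i t) = (\<Sum>\<^sub>\<infinity>i\<in>I. f i s)"
proof (rule DERIV_isconst_all[of "\<lambda>s. \<Sum>\<^sub>\<infinity>i\<in>I. f i s"], intro allI)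
  fix x
  obtain M where M: "M summable_on I" "\<forall>s\<in>{x-1..x+1}. \<forall>i\<in>I. \<bar>f' i s\<bar> \<le> M i"
    using dominated by blast
  have ball: "ball x 1 \<subseteq> {x-1..x+1}"
    by (auto simp: dist_real_def)
  have "((\<lambda>s. \<Sum>\<^sub>\<infinity>i\<in>I. f i s) has_real_derivative (\<Sum>\<^sub>\<infinity>i\<in>I. f' i x)) (at x)"
    by (rule has_real_derivative_infsum[OF I, where r=1 and M=M]) (use M ball deriv summable in auto)
  then show "((\<lambda>s. \<Sum>\<^sub>\<infinity>i\<in>I. f i s) has_real_derivative 0) (at x)"
    by (simp add: zero)
qed

section \<open>Difference operators and summation by parts\<close>

abbreviation DmDp :: "real \<Rightarrow> (int \<Rightarrow> real) \<Rightarrow> (int \<Rightarrow> real)" where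
  "DmDp h \<equiv> Dm h \<circ> Dp h"

lemma DmDp_apply: "Dm h (Dp h u) j = (u (j + 1) - 2 * u j + u (j - 1)) / h\<^sup>2"
  by (cases "h = 0") (simp_all add: Dm_def Dp_def field_simps power2_eq_square)

lemma summable_on_Dp: "u summable_on UNIV \<Longrightarrow> Dp h u summable_on UNIV"
  unfolding Dp_def by (intro summable_on_divide_const summable_on_diff summable_on_int_shift)

lemma summable_on_Dm: "u summable_on UNIV \<Longrightarrow> Dm h u summable_on UNIV"
  unfolding Dm_def using summable_on_int_shift[of u "-1"]
  by (intro summable_on_divide_const summable_on_diff) auto

lemma summable_on_D0: "u summable_on UNIV \<Longrightarrow> D0 h u summable_on UNIV"
  unfolding D0_def using summable_on_int_shift[of u "-1"] summable_on_int_shift[of u 1]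
  by (intro summable_on_divide_const summable_on_diff) auto

lemma summable_on_DmDp: "u summable_on UNIV \<Longrightarrow> DmDp h u summable_on UNIV"
  by (simp add: summable_on_Dm summable_on_Dp)

lemma summable_on_DmDp_pow: "u summable_on UNIV \<Longrightarrow> (DmDp h ^^ k) u summable_on UNIV"
  by (induction k) (auto intro: summable_on_Dm summable_on_Dp)

lemma summable_on_D0DDk: "u summable_on UNIV \<Longrightarrow> D0DDk h k u summable_on UNIV"
  unfolding D0DDk_def by (intro summable_on_D0 summable_on_DmDp_pow)

lemma infsum_mult_shift_diff:
  fixes u z :: "int \<Rightarrow> real"
  assumes u: "u summable_on UNIV" and z: "z summable_on UNIV"
  shows "(\<Sum>\<^sub>\<infinity>j. z j * (u (j + a) - u (j + b))) = (\<Sum>\<^sub>\<infinity>j. (z (j - a) - z (j - b)) * u j)"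
proof -
  have shifted: "(\<lambda>j. z j * u (j + c)) summable_on UNIV" "(\<lambda>j. z (j - c) * u j) summable_on UNIV"
    for c
    using summable_on_mult[OF summable_on_int_shift[OF u] z]
      summable_on_mult[OF u summable_on_int_shift[OF z, of "-c"]] by simp_all
  have swap: "(\<Sum>\<^sub>\<infinity>j. z j * u (j + c)) = (\<Sum>\<^sub>\<infinity>j. z (j - c) * u j)" for c
    using infsum_int_shift[of "\<lambda>j. z (j - c) * u j" c] by simp
  show ?thesis
    unfolding right_diff_distrib left_diff_distrib
    by (simp add: infsum_diff shifted swap)
qed

lemma infsum_mult_Dp:
  assumes "u summable_on UNIV" "z summable_on UNIV"
  shows "(\<Sum>\<^sub>\<infinity>j. z j * Dp h u j) = - (\<Sum>\<^sub>\<infinity>j. Dm h z j * u j)"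
proof -
  have "(\<Sum>\<^sub>\<infinity>j. z j * Dp h u j) = (\<Sum>\<^sub>\<infinity>j. z j * (u (j + 1) - u (j + 0))) / h"
    by (simp add: Dp_def infsum_divide_const)
  also have "\<dots> = (\<Sum>\<^sub>\<infinity>j. - ((z j - z (j - 1)) * u j)) / h"
    unfolding infsum_mult_shift_diff[OF assms] by (simp add: algebra_simps)
  also have "\<dots> = - (\<Sum>\<^sub>\<infinity>j. Dm h z j * u j)"
    by (simp add: Dm_def infsum_divide_const infsum_uminus)
  finally show ?thesis .
qed

lemma infsum_mult_Dm:
  assumes "u summable_on UNIV" "z summable_on UNIV"
  shows "(\<Sum>\<^sub>\<infinity>j. z j * Dm h u j) = - (\<Sum>\<^sub>\<infinity>j. Dp h z j * u j)"
  using infsum_mult_Dp[OF assms(2,1), of h] by (simp add: mult.commute)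

lemma infsum_mult_DmDp:
  assumes "u summable_on UNIV" "z summable_on UNIV"
  shows "(\<Sum>\<^sub>\<infinity>j. z j * DmDp h u j) = (\<Sum>\<^sub>\<infinity>j. DmDp h z j * u j)"
  using infsum_mult_Dm[OF summable_on_Dp[OF assms(1)] assms(2), of h]
    infsum_mult_Dp[OF assms(1) summable_on_Dp[OF assms(2)], of h]
  by simp

lemma infsum_mult_DmDp_pow:
  assumes u: "u summable_on UNIV" and z: "z summable_on UNIV"
  shows "(\<Sum>\<^sub>\<infinity>j. z j * (DmDp h ^^ k) u j) = (\<Sum>\<^sub>\<infinity>j. (DmDp h ^^ k) z j * u j)"
  using z
proof (induction k arbitrary: z)
  case (Suc k)
  have "(\<Sum>\<^sub>\<infinity>j. z j * (DmDp h ^^ Suc k) u j) = (\<Sum>\<^sub>\<infinity>j. DmDp h z j * (DmDp h ^^ k) u j)"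
    using infsum_mult_DmDp[OF summable_on_DmDp_pow[OF u] Suc.prems] by simp
  also have "\<dots> = (\<Sum>\<^sub>\<infinity>j. (DmDp h ^^ k) (DmDp h z) j * u j)"
    by (rule Suc.IH) (rule summable_on_DmDp[OF Suc.prems])
  also have "\<dots> = (\<Sum>\<^sub>\<infinity>j. (DmDp h ^^ Suc k) z j * u j)"
    by (simp only: funpow_Suc_right o_apply)
  finally show ?case .
qed simp

lemma infsum_mult_D0:
  assumes "u summable_on UNIV" "z summable_on UNIV"
  shows "(\<Sum>\<^sub>\<infinity>j. z j * D0 h u j) = - (\<Sum>\<^sub>\<infinity>j. D0 h z j * u j)"
proof -
  have "(\<Sum>\<^sub>\<infinity>j. z j * D0 h u j) = (\<Sum>\<^sub>\<infinity>j. z j * (u (j + 1) - u (j + -1))) / (2 * h)"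
    by (simp add: D0_def infsum_divide_const)
  also have "\<dots> = (\<Sum>\<^sub>\<infinity>j. - ((z (j + 1) - z (j - 1)) * u j)) / (2 * h)"
    unfolding infsum_mult_shift_diff[OF assms] by (simp add: algebra_simps)
  also have "\<dots> = - (\<Sum>\<^sub>\<infinity>j. D0 h z j * u j)"
    by (simp add: D0_def infsum_divide_const infsum_uminus)
  finally show ?thesis .
qed

lemma D0_DmDp_commute: "D0 h (Dm h (Dp h u)) = Dm h (Dp h (D0 h u))"
  by (rule ext) (cases "h = 0", simp_all add: D0_def Dm_def Dp_def field_simps)

lemma D0DDk_eq_DmDp_pow_D0: "D0DDk h k u = (DmDp h ^^ k) (D0 h u)"
  unfolding D0DDk_def by (induction k) (simp_all add: D0_DmDp_commute)

lemma D0DDk_DmDp_commute: "D0DDk h k (Dm h (Dp h u)) = Dm h (Dp h (D0DDk h k u))"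
  unfolding D0DDk_eq_DmDp_pow_D0 by (metis D0_DmDp_commute comp_apply funpow_swap1)

text \<open>\<open>D\<^sub>0 (D\<^sub>-D\<^sub>+)\<^sup>k\<close> is antisymmetric, being the product of the antisymmetric \<open>D\<^sub>0\<close> with a
  symmetric operator that commutes with it.\<close>
lemma infsum_mult_D0DDk:
  assumes "u summable_on UNIV" "z summable_on UNIV"
  shows "(\<Sum>\<^sub>\<infinity>j. z j * D0DDk h k u j) = - (\<Sum>\<^sub>\<infinity>j. u j * D0DDk h k z j)"
proof -
  have "(\<Sum>\<^sub>\<infinity>j. z j * D0DDk h k u j) = - (\<Sum>\<^sub>\<infinity>j. D0 h z j * (DmDp h ^^ k) u j)"
    unfolding D0DDk_def by (rule infsum_mult_D0[OF summable_on_DmDp_pow[OF assms(1)] assms(2)])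
  also have "\<dots> = - (\<Sum>\<^sub>\<infinity>j. (DmDp h ^^ k) (D0 h z) j * u j)"
    using infsum_mult_DmDp_pow[OF assms(1) summable_on_D0[OF assms(2)]] by simp
  also have "\<dots> = - (\<Sum>\<^sub>\<infinity>j. u j * D0DDk h k z j)"
    unfolding D0DDk_eq_DmDp_pow_D0 by (simp add: mult.commute)
  finally show ?thesis .
qed

lemma infsum_mult_D0DDk_self:
  "u summable_on UNIV \<Longrightarrow> (\<Sum>\<^sub>\<infinity>j. u j * D0DDk h k u j) = 0"
  using infsum_mult_D0DDk[of u u h k] by simp

lemma infsum_DmDp_mult_D0DDk:
  assumes u: "u summable_on UNIV"
  shows "(\<Sum>\<^sub>\<infinity>j. DmDp h u j * D0DDk h k u j) = 0"
proof -
  note Lu = summable_on_DmDp[OF u]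
  have "(\<Sum>\<^sub>\<infinity>j. D0DDk h k u j * DmDp h u j) = (\<Sum>\<^sub>\<infinity>j. DmDp h (D0DDk h k u) j * u j)"
    by (rule infsum_mult_DmDp[OF u summable_on_D0DDk[OF u]])
  also have "\<dots> = (\<Sum>\<^sub>\<infinity>j. u j * D0DDk h k (DmDp h u) j)"
    by (simp add: D0DDk_DmDp_commute mult.commute)
  also have "\<dots> = - (\<Sum>\<^sub>\<infinity>j. DmDp h u j * D0DDk h k u j)"
    by (rule infsum_mult_D0DDk[OF Lu u])
  finally show ?thesis
    by (simp add: mult.commute)
qed

lemma abs_DmDp_le:
  assumes "\<And>i. \<bar>u i\<bar> \<le> B i"
  shows "\<bar>DmDp h u j\<bar> \<le> (B (j + 1) + 2 * B j + B (j - 1)) / h\<^sup>2"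
proof -
  have "\<bar>u (j + 1) - 2 * u j + u (j - 1)\<bar> \<le> B (j + 1) + 2 * B j + B (j - 1)"
    using assms[of "j + 1"] assms[of j] assms[of "j - 1"] by linarith
  then show ?thesis
    by (simp add: DmDp_apply abs_divide divide_right_mono)
qed

lemma DmDp_pow_Suc_apply:
  "(DmDp h ^^ Suc k) u j = ((DmDp h ^^ k) u (j + 1) - 2 * (DmDp h ^^ k) u j + (DmDp h ^^ k) u (j - 1)) / h\<^sup>2"
  by (simp add: DmDp_apply)

lemma abs_DmDp_pow_le:
  assumes "\<And>i. \<bar>u i\<bar> \<le> c"
  shows "\<bar>(DmDp h ^^ k) u j\<bar> \<le> (4 / h\<^sup>2) ^ k * c"
proof (induction k arbitrary: j)
  case (Suc k)
  let ?c = "(4 / h\<^sup>2) ^ k * c"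
  have "\<bar>(DmDp h ^^ k) u (j + 1) - 2 * (DmDp h ^^ k) u j + (DmDp h ^^ k) u (j - 1)\<bar> \<le> 4 * ?c"
    using Suc.IH[of "j + 1"] Suc.IH[of j] Suc.IH[of "j - 1"] by linarith
  then show ?case
    unfolding DmDp_pow_Suc_apply by (simp add: abs_divide divide_right_mono)
qed (use assms in simp)

lemma abs_D0DDk_le:
  assumes "\<And>i. \<bar>u i\<bar> \<le> c"
  shows "\<bar>D0DDk h k u j\<bar> \<le> (4 / h\<^sup>2) ^ k * c / \<bar>h\<bar>"
proof -
  let ?c = "(4 / h\<^sup>2) ^ k * c"
  have "\<bar>(DmDp h ^^ k) u (j + 1) - (DmDp h ^^ k) u (j - 1)\<bar> \<le> 2 * ?c"
    using abs_DmDp_pow_le[where u=u and c=c and h=h and k=k, OF assms, of "j + 1"]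
      abs_DmDp_pow_le[where u=u and c=c and h=h and k=k, OF assms, of "j - 1"]
    by linarith
  then have "\<bar>(DmDp h ^^ k) u (j + 1) - (DmDp h ^^ k) u (j - 1)\<bar> / (2 * \<bar>h\<bar>) \<le> 2 * ?c / (2 * \<bar>h\<bar>)"
    by (rule divide_right_mono) simp
  then show ?thesis
    by (simp add: D0DDk_def D0_def abs_divide abs_mult)
qed

lemma has_real_derivative_DmDp_pow:
  assumes "\<And>j. ((\<lambda>s. u s j) has_real_derivative u' j) (at t)"
  shows "((\<lambda>s. (DmDp h ^^ k) (u s) j) has_real_derivative (DmDp h ^^ k) u' j) (at t)"
proof (induction k arbitrary: j)
  case (Suc k)
  show ?case
    unfolding DmDp_pow_Suc_apply by (intro DERIV_cdivide DERIV_add DERIV_diff DERIV_cmult Suc.IH)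
qed (simp add: assms)

lemma has_real_derivative_D0DDk:
  assumes "\<And>j. ((\<lambda>s. u s j) has_real_derivative u' j) (at t)"
  shows "((\<lambda>s. D0DDk h k (u s) j) has_real_derivative D0DDk h k u' j) (at t)"
  unfolding D0DDk_def D0_def
  by (intro DERIV_cdivide DERIV_diff has_real_derivative_DmDp_pow assms)

section \<open>The semidiscrete wave system\<close>

lemma sd_wave_solution_derivatives:
  assumes "is_sd_wave_solution h C v w"
  shows "((\<lambda>s. v s j) has_real_derivative w t j) (at t)"
    and "((\<lambda>s. w s j) has_real_derivative DmDp h (v t) j - C * v t j) (at t)"
  using assms by (simp_all add: is_sd_wave_solution_def DmDp_apply)

lemma sd_decay_summable:
  assumes "sd_decay v w"
  shows "v t summable_on UNIV" and "w t summable_on UNIV"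
proof -
  obtain B where B: "B summable_on UNIV" "\<forall>s\<in>{t..t}. \<forall>j. \<bar>v s j\<bar> \<le> B j \<and> \<bar>w s j\<bar> \<le> B j"
    using assms unfolding sd_decay_def by blast
  show "v t summable_on UNIV" "w t summable_on UNIV"
    using B by (auto intro: summable_on_dominated)
qed

lemma infsum_D0DDk_rate_eq_0:
  assumes u: "u summable_on UNIV" and z: "z summable_on UNIV"
  shows "(\<Sum>\<^sub>\<infinity>j. ((DmDp h u j - C * u j) * D0DDk h k u j + D0DDk h k z j * z j) * h) = 0"
proof -
  have has_sum_0: "(f has_sum 0) UNIV" if "f summable_on UNIV" "infsum f UNIV = 0" for f :: "int \<Rightarrow> real"
    using has_sum_infsum[OF that(1)] that(2) by simp
  have "((\<lambda>j. DmDp h u j * D0DDk h k u j + (- C) * (u j * D0DDk h k u j) + z j * D0DDk h k z j)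
      has_sum (0 + (- C) * 0 + 0)) UNIV"
    by (intro has_sum_add has_sum_cmult_right has_sum_0 summable_on_mult summable_on_DmDp
        summable_on_D0DDk infsum_DmDp_mult_D0DDk infsum_mult_D0DDk_self u z)
  from has_sum_cmult_left[OF this, of h] show ?thesis
    by (intro infsumI) (simp add: algebra_simps)
qed

lemma D0DDk_rate_dominated:
  assumes B: "B summable_on UNIV"
  shows "\<exists>M. M summable_on UNIV \<and> (\<forall>u z j. (\<forall>i. \<bar>u i\<bar> \<le> B i \<and> \<bar>z i\<bar> \<le> B i) \<longrightarrow>
    \<bar>((DmDp h u j - C * u j) * D0DDk h k u j + D0DDk h k z j * z j) * h\<bar> \<le> M j)"
proof -
  define K where "K = (4 / h\<^sup>2) ^ k * (\<Sum>\<^sub>\<infinity>i. \<bar>B i\<bar>) / \<bar>h\<bar>"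
  define R where "R j = (B (j + 1) + 2 * B j + B (j - 1)) / h\<^sup>2 + \<bar>C\<bar> * B j" for j
  define M where "M j = (R j * K + K * B j) * \<bar>h\<bar>" for j
  have "M summable_on UNIV"
    unfolding M_def R_def using summable_on_int_shift[OF B, of 1] summable_on_int_shift[OF B, of "-1"]
    by (intro summable_on_cmult_left summable_on_add summable_on_cmult_right summable_on_divide_const B)
      simp_all
  moreover have "\<bar>((DmDp h u j - C * u j) * D0DDk h k u j + D0DDk h k z j * z j) * h\<bar> \<le> M j"
    if "\<forall>i. \<bar>u i\<bar> \<le> B i \<and> \<bar>z i\<bar> \<le> B i" for u z j
  proof -
    have uB: "\<bar>u i\<bar> \<le> B i" and zB: "\<bar>z i\<bar> \<le> B i" for i
      using that by auto
    have "B i \<le> (\<Sum>\<^sub>\<infinity>i. \<bar>B i\<bar>)" for i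
      using abs_le_infsum_abs[OF B, of i] by simp
    then have "\<bar>u i\<bar> \<le> (\<Sum>\<^sub>\<infinity>i. \<bar>B i\<bar>)" "\<bar>z i\<bar> \<le> (\<Sum>\<^sub>\<infinity>i. \<bar>B i\<bar>)" for i
      using uB[of i] zB[of i] by (meson order_trans)+
    then have Au: "\<bar>D0DDk h k u j\<bar> \<le> K" and Az: "\<bar>D0DDk h k z j\<bar> \<le> K"
      unfolding K_def by (blast intro: abs_D0DDk_le)+
    have X: "\<bar>DmDp h u j - C * u j\<bar> \<le> R j"
      using abs_DmDp_le[of u B h j] uB abs_triangle_ineq4[of "DmDp h u j" "C * u j"]
        mult_left_mono[OF uB[of j], of "\<bar>C\<bar>"]
      unfolding R_def by (simp add: abs_mult)
    have "\<bar>(DmDp h u j - C * u j) * D0DDk h k u j + D0DDk h k z j * z j\<bar>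
        \<le> \<bar>DmDp h u j - C * u j\<bar> * \<bar>D0DDk h k u j\<bar> + \<bar>D0DDk h k z j\<bar> * \<bar>z j\<bar>"
      unfolding abs_mult[symmetric] by (rule abs_triangle_ineq)
    also have "\<dots> \<le> R j * K + K * B j"
      using X Au Az zB[of j] by (intro add_mono mult_mono) auto
    finally show ?thesis
      unfolding M_def abs_mult[of _ h] by (rule mult_right_mono) simp
  qed
  ultimately show ?thesis
    by blast
qed

lemma sd_wave_D0DDk_functional_conserved:
  assumes sol: "is_sd_wave_solution h C v w" and decay: "sd_decay v w"
  shows "(\<Sum>\<^sub>\<infinity>j. w t j * D0DDk h k (v t) j * h) = (\<Sum>\<^sub>\<infinity>j. w s j * D0DDk h k (v s) j * h)"
proof (rule infsum_const_if_derivative_infsum_zero)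
  let ?rate = "\<lambda>j t. ((DmDp h (v t) j - C * v t j) * D0DDk h k (v t) j + D0DDk h k (w t) j * w t j) * h"
  show "((\<lambda>s. w s j * D0DDk h k (v s) j * h) has_real_derivative ?rate j t) (at t)" for j t
    using sd_wave_solution_derivatives[OF sol]
    by (intro DERIV_cmult_right DERIV_mult has_real_derivative_D0DDk) auto
  show "(\<lambda>j. w t j * D0DDk h k (v t) j * h) summable_on UNIV" for t
    using sd_decay_summable[OF decay]
    by (intro summable_on_cmult_left summable_on_mult summable_on_D0DDk)
  show "\<exists>M. M summable_on UNIV \<and> (\<forall>t\<in>{a..b}. \<forall>j\<in>UNIV. \<bar>?rate j t\<bar> \<le> M j)" for a b
  proof -
    obtain B where "B summable_on UNIV" and B: "\<forall>t\<in>{a..b}. \<forall>j. \<bar>v t j\<bar> \<le> B j \<and> \<bar>w t j\<bar> \<le> B j"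
      using decay unfolding sd_decay_def by blast
    with D0DDk_rate_dominated show ?thesis
      by (metis (no_types, lifting))
  qed
  show "(\<Sum>\<^sub>\<infinity>j. ?rate j t) = 0" for t
    using sd_decay_summable[OF decay] by (rule infsum_D0DDk_rate_eq_0)
qed simp_all

lemma sd_wave_D0DDk_functional_antisym:
  assumes "sd_decay v w"
  shows "(\<Sum>\<^sub>\<infinity>j. w t j * D0DDk h k (v t) j * h) = - (\<Sum>\<^sub>\<infinity>j. v t j * D0DDk h k (w t) j * h)"
  using infsum_mult_D0DDk[OF sd_decay_summable[OF assms], where h=h and k=k]
  by (simp add: infsum_cmult_left')

definition casoratian :: "(int \<Rightarrow> real) \<Rightarrow> (int \<Rightarrow> real) \<Rightarrow> int \<Rightarrow> real" where
  "casoratian u z j = u j * z (j + 1) - u (j + 1) * z j"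

lemma DmDp_lagrange_identity:
  "u j * DmDp h z j - DmDp h u j * z j = (casoratian u z j - casoratian u z (j - 1)) / h\<^sup>2"
  by (cases "h = 0") (simp_all add: casoratian_def DmDp_apply field_simps)

lemma abs_casoratian_diff_le:
  assumes "\<And>j m. m \<in> {-1, 0, 1} \<Longrightarrow> \<bar>u (j + m)\<bar> * \<bar>z j\<bar> \<le> G j"
  shows "\<bar>casoratian u z j - casoratian u z (j - 1)\<bar> \<le> G (j + 1) + 2 * G j + G (j - 1)"
proof -
  have "\<bar>u j * z (j + 1)\<bar> \<le> G (j + 1)" "\<bar>u (j + 1) * z j\<bar> \<le> G j"
    "\<bar>u (j - 1) * z j\<bar> \<le> G j" "\<bar>u j * z (j - 1)\<bar> \<le> G (j - 1)"
    using assms[of "-1" "j + 1"] assms[of 1 j] assms[of "-1" j] assms[of 1 "j - 1"]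
    by (simp_all add: abs_mult)
  then show ?thesis
    unfolding casoratian_def by simp
qed

lemma summable_on_casoratian:
  assumes G: "G summable_on UNIV" and bound: "\<And>j m. m \<in> {-1, 0, 1} \<Longrightarrow> \<bar>u (j + m)\<bar> * \<bar>z j\<bar> \<le> G j"
  shows "casoratian u z summable_on UNIV"
proof -
  have "\<bar>u j * z (j + 1)\<bar> \<le> G (j + 1)" "\<bar>u (j + 1) * z j\<bar> \<le> G j" for j
    using bound[of "-1" "j + 1"] bound[of 1 j] by (simp_all add: abs_mult)
  then have "(\<lambda>j. u j * z (j + 1)) summable_on UNIV" "(\<lambda>j. u (j + 1) * z j) summable_on UNIV"
    using summable_on_dominated[OF summable_on_int_shift[OF G, of 1], of "\<lambda>j. u j * z (j + 1)"]
      summable_on_dominated[OF G, of "\<lambda>j. u (j + 1) * z j"]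
    by simp_all
  then show ?thesis
    unfolding casoratian_def[abs_def] by (rule summable_on_diff)
qed

lemma has_real_derivative_sd_wave_pairing:
  assumes sol_ab: "is_sd_wave_solution h C a b" and sol_vw: "is_sd_wave_solution h C v w"
  shows "((\<lambda>s. (a s j * w s j - b s j * v s j) * h) has_real_derivative
    (casoratian (a t) (v t) j - casoratian (a t) (v t) (j - 1)) * (h / h\<^sup>2)) (at t)"
proof (rule DERIV_cong)
  show "((\<lambda>s. (a s j * w s j - b s j * v s j) * h) has_real_derivative
      ((b t j * w t j + (DmDp h (v t) j - C * v t j) * a t j)
        - ((DmDp h (a t) j - C * a t j) * v t j + w t j * b t j)) * h) (at t)"
    using sd_wave_solution_derivatives[OF sol_ab] sd_wave_solution_derivatives[OF sol_vw]
    by (intro DERIV_cmult_right DERIV_diff DERIV_mult) auto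
  have "((b t j * w t j + (DmDp h (v t) j - C * v t j) * a t j)
        - ((DmDp h (a t) j - C * a t j) * v t j + w t j * b t j)) * h
      = (a t j * DmDp h (v t) j - DmDp h (a t) j * v t j) * h"
    by (simp add: algebra_simps)
  also have "\<dots> = (casoratian (a t) (v t) j - casoratian (a t) (v t) (j - 1)) * (h / h\<^sup>2)"
    unfolding DmDp_lagrange_identity by simp
  finally show "((b t j * w t j + (DmDp h (v t) j - C * v t j) * a t j)
        - ((DmDp h (a t) j - C * a t j) * v t j + w t j * b t j)) * h
      = (casoratian (a t) (v t) j - casoratian (a t) (v t) (j - 1)) * (h / h\<^sup>2)" .
qed

lemma sd_wave_pairing_conserved:
  assumes sol_ab: "is_sd_wave_solution h C a b" and sol_vw: "is_sd_wave_solution h C v w"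
    and dominated: "\<And>lo hi. \<exists>G. G summable_on UNIV \<and> (\<forall>t\<in>{lo..hi}.
      (\<forall>j m. m \<in> {-1, 0, 1} \<longrightarrow> \<bar>a t (j + m)\<bar> * \<bar>v t j\<bar> \<le> G j) \<and>
      (\<forall>j. \<bar>a t j\<bar> * \<bar>w t j\<bar> \<le> G j \<and> \<bar>b t j\<bar> * \<bar>v t j\<bar> \<le> G j))"
  shows "(\<Sum>\<^sub>\<infinity>j. (a t j * w t j - b t j * v t j) * h) = (\<Sum>\<^sub>\<infinity>j. (a s j * w s j - b s j * v s j) * h)"
proof (rule infsum_const_if_derivative_infsum_zero)
  let ?rate = "\<lambda>j t. (casoratian (a t) (v t) j - casoratian (a t) (v t) (j - 1)) * (h / h\<^sup>2)"
  show "((\<lambda>s. (a s j * w s j - b s j * v s j) * h) has_real_derivative ?rate j t) (at t)" for j t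
    by (rule has_real_derivative_sd_wave_pairing[OF sol_ab sol_vw])
  show "(\<lambda>j. (a t j * w t j - b t j * v t j) * h) summable_on UNIV" for t
  proof -
    obtain G where "G summable_on UNIV" and G: "\<forall>j. \<bar>a t j\<bar> * \<bar>w t j\<bar> \<le> G j \<and> \<bar>b t j\<bar> * \<bar>v t j\<bar> \<le> G j"
      using dominated[of t t] by auto
    have bound: "\<bar>(a t j * w t j - b t j * v t j) * h\<bar> \<le> 2 * G j * \<bar>h\<bar>" for j
      using G[rule_format, of j] abs_triangle_ineq4[of "a t j * w t j" "b t j * v t j"]
      by (simp add: abs_mult mult_right_mono flip: distrib_right)
    have "(\<lambda>j. 2 * G j * \<bar>h\<bar>) summable_on UNIV"
      by (intro summable_on_cmult_left summable_on_cmult_right) fact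
    then show ?thesis
      using bound by (rule summable_on_dominated)
  qed
  show "\<exists>M. M summable_on UNIV \<and> (\<forall>t\<in>{lo..hi}. \<forall>j\<in>UNIV. \<bar>?rate j t\<bar> \<le> M j)" for lo hi
  proof -
    obtain G where G_sum: "G summable_on UNIV"
      and G: "\<forall>t\<in>{lo..hi}. \<forall>j m. m \<in> {-1, 0, 1} \<longrightarrow> \<bar>a t (j + m)\<bar> * \<bar>v t j\<bar> \<le> G j"
      using dominated[of lo hi] by meson
    have "\<bar>?rate j t\<bar> \<le> (G (j + 1) + 2 * G j + G (j - 1)) * \<bar>h / h\<^sup>2\<bar>" if "t \<in> {lo..hi}" for t j
      unfolding abs_mult using G that
      by (intro mult_right_mono abs_casoratian_diff_le) auto
    moreover have "(\<lambda>j. (G (j + 1) + 2 * G j + G (j - 1)) * \<bar>h / h\<^sup>2\<bar>) summable_on UNIV"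
      using summable_on_int_shift[OF G_sum, of 1] summable_on_int_shift[OF G_sum, of "-1"]
      by (intro summable_on_cmult_left summable_on_add summable_on_cmult_right G_sum) simp_all
    ultimately show ?thesis
      by blast
  qed
  show "(\<Sum>\<^sub>\<infinity>j. ?rate j t) = 0" for t
  proof -
    obtain G where "G summable_on UNIV"
      and "\<forall>j m. m \<in> {-1, 0, 1} \<longrightarrow> \<bar>a t (j + m)\<bar> * \<bar>v t j\<bar> \<le> G j"
      using dominated[of t t] by auto
    then have "casoratian (a t) (v t) summable_on UNIV"
      by (intro summable_on_casoratian) auto
    then show ?thesis
      unfolding infsum_cmult_left' by (simp add: infsum_int_telescope)
  qed
qed simp_all

lemma sd_wave_pairing_products_dominated:
  fixes a b v w :: "real \<Rightarrow> int \<Rightarrow> real"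
  assumes "\<forall>lo hi. \<exists>G. G summable_on UNIV \<and> (\<forall>t\<in>{lo..hi}. \<forall>j. \<forall>m\<in>{-1, 0, 1 :: int}.
    (\<bar>a t (j + m)\<bar> + \<bar>b t (j + m)\<bar>) * (\<bar>v t j\<bar> + \<bar>w t j\<bar>) \<le> G j)"
  shows "\<exists>G. G summable_on UNIV \<and> (\<forall>t\<in>{lo..hi}.
    (\<forall>j m. m \<in> {-1, 0, 1} \<longrightarrow> \<bar>a t (j + m)\<bar> * \<bar>v t j\<bar> \<le> G j) \<and>
    (\<forall>j. \<bar>a t j\<bar> * \<bar>w t j\<bar> \<le> G j \<and> \<bar>b t j\<bar> * \<bar>v t j\<bar> \<le> G j))"
proof -
  have le: "\<bar>x\<bar> * \<bar>y\<bar> \<le> (\<bar>x\<bar> + \<bar>x'\<bar>) * (\<bar>y\<bar> + \<bar>y'\<bar>)" for x x' y y' :: real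
    by (intro mult_mono) auto
  obtain G where "G summable_on UNIV" and G: "\<forall>t\<in>{lo..hi}. \<forall>j. \<forall>m\<in>{-1, 0, 1 :: int}.
      (\<bar>a t (j + m)\<bar> + \<bar>b t (j + m)\<bar>) * (\<bar>v t j\<bar> + \<bar>w t j\<bar>) \<le> G j"
    using assms by blast
  have av: "\<bar>a t (j + m)\<bar> * \<bar>v t j\<bar> \<le> G j" if "t \<in> {lo..hi}" "m \<in> {-1, 0, 1}" for t j m
    using G[rule_format, where t=t and j=j and m=m, OF that]
    by (rule order_trans[OF le])
  have aw_bv: "\<bar>a t j\<bar> * \<bar>w t j\<bar> \<le> G j \<and> \<bar>b t j\<bar> * \<bar>v t j\<bar> \<le> G j" if "t \<in> {lo..hi}" for t j
  proof -
    have "(\<bar>a t j\<bar> + \<bar>b t j\<bar>) * (\<bar>v t j\<bar> + \<bar>w t j\<bar>) \<le> G j"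
      using G[rule_format, where t=t and j=j and m=0, OF that] by simp
    moreover have "\<bar>a t j\<bar> * \<bar>w t j\<bar> \<le> (\<bar>a t j\<bar> + \<bar>b t j\<bar>) * (\<bar>v t j\<bar> + \<bar>w t j\<bar>)"
      using le[where x="a t j" and x'="b t j" and y="w t j" and y'="v t j"]
      by (simp only: add.commute[of "\<bar>w t j\<bar>"])
    moreover have "\<bar>b t j\<bar> * \<bar>v t j\<bar> \<le> (\<bar>a t j\<bar> + \<bar>b t j\<bar>) * (\<bar>v t j\<bar> + \<bar>w t j\<bar>)"
      using le[where x="b t j" and x'="a t j" and y="v t j" and y'="w t j"]
      by (simp only: add.commute[of "\<bar>b t j\<bar>"])
    ultimately show ?thesis
      by simp
  qed
  show ?thesis
    using \<open>G summable_on UNIV\<close> av aw_bv by (intro exI[of _ G]) auto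
qed

lemma sd_wave_solution_grid_restriction:
  assumes "\<forall>t x. ((\<lambda>s. alpha s x) has_real_derivative alpha_t t x) (at t)"
    and "\<forall>t x. ((\<lambda>s. alpha_t s x) has_real_derivative
      ((alpha t (x + h) - 2 * alpha t x + alpha t (x - h)) / h\<^sup>2 - C * alpha t x)) (at t)"
  shows "is_sd_wave_solution h C (\<lambda>t j. alpha t (x0 + real_of_int j * h)) (\<lambda>t j. alpha_t t (x0 + real_of_int j * h))"
proof -
  have shift: "x0 + real_of_int (j + 1) * h = (x0 + real_of_int j * h) + h"
    "x0 + real_of_int (j - 1) * h = (x0 + real_of_int j * h) - h" for j
    by (simp_all add: algebra_simps)
  show ?thesis
    unfolding is_sd_wave_solution_def shift using assms by blast
qed

theorem mainTheorem5:
  fixes h C x0 :: real and v w :: "real \<Rightarrow> int \<Rightarrow> real"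
  assumes hpos: "h > 0"
    and sol: "is_sd_wave_solution h C v w"
    and decay: "sd_decay v w"
  shows
    "(\<forall>k::nat. \<forall>t.
        (\<Sum>\<^sub>\<infinity>j. w t j * D0DDk h k (v t) j * h) = - (\<Sum>\<^sub>\<infinity>j. v t j * D0DDk h k (w t) j * h)) \<and>
     (\<forall>k::nat. \<forall>t s.
        (\<Sum>\<^sub>\<infinity>j. w t j * D0DDk h k (v t) j * h) = (\<Sum>\<^sub>\<infinity>j. w s j * D0DDk h k (v s) j * h)) \<and>
     (\<forall>(alpha :: real \<Rightarrow> real \<Rightarrow> real) (alpha_t :: real \<Rightarrow> real \<Rightarrow> real).
        (\<forall>t x. ((\<lambda>s. alpha s x) has_real_derivative alpha_t t x) (at t)) \<longrightarrow>
        (\<forall>t x. ((\<lambda>s. alpha_t s x) has_real_derivative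
                 ((alpha t (x + h) - 2 * alpha t x + alpha t (x - h)) / h\<^sup>2 - C * alpha t x)) (at t)) \<longrightarrow>
        (\<forall>a b. \<exists>G. G summable_on (UNIV :: int set) \<and>
           (\<forall>t\<in>{a..b}. \<forall>j. \<forall>m\<in>{-1, 0, 1 :: int}.
              (\<bar>alpha t (x0 + real_of_int (j + m) * h)\<bar> + \<bar>alpha_t t (x0 + real_of_int (j + m) * h)\<bar>)
                * (\<bar>v t j\<bar> + \<bar>w t j\<bar>) \<le> G j)) \<longrightarrow>
        (\<forall>t s.
           (\<Sum>\<^sub>\<infinity>j. (alpha t (x0 + real_of_int j * h) * w t j - alpha_t t (x0 + real_of_int j * h) * v t j) * h)
         = (\<Sum>\<^sub>\<infinity>j. (alpha s (x0 + real_of_int j * h) * w s j - alpha_t s (x0 + real_of_int j * h) * v s j) * h)))"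
proof (intro conjI allI impI)
  fix k t
  show "(\<Sum>\<^sub>\<infinity>j. w t j * D0DDk h k (v t) j * h) = - (\<Sum>\<^sub>\<infinity>j. v t j * D0DDk h k (w t) j * h)"
    by (rule sd_wave_D0DDk_functional_antisym[OF decay])
next
  fix k t s
  show "(\<Sum>\<^sub>\<infinity>j. w t j * D0DDk h k (v t) j * h) = (\<Sum>\<^sub>\<infinity>j. w s j * D0DDk h k (v s) j * h)"
    by (rule sd_wave_D0DDk_functional_conserved[OF sol decay])
next
  fix alpha alpha_t :: "real \<Rightarrow> real \<Rightarrow> real" and t s
  assume "\<forall>t x. ((\<lambda>s. alpha s x) has_real_derivative alpha_t t x) (at t)"
    and "\<forall>t x. ((\<lambda>s. alpha_t s x) has_real_derivative
      ((alpha t (x + h) - 2 * alpha t x + alpha t (x - h)) / h\<^sup>2 - C * alpha t x)) (at t)"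
  note grid_solution = sd_wave_solution_grid_restriction[OF this, of x0]
  assume "\<forall>a b. \<exists>G. G summable_on (UNIV :: int set) \<and> (\<forall>t\<in>{a..b}. \<forall>j. \<forall>m\<in>{-1, 0, 1 :: int}.
    (\<bar>alpha t (x0 + real_of_int (j + m) * h)\<bar> + \<bar>alpha_t t (x0 + real_of_int (j + m) * h)\<bar>)
      * (\<bar>v t j\<bar> + \<bar>w t j\<bar>) \<le> G j)"
  from sd_wave_pairing_products_dominated[where a="\<lambda>t j. alpha t (x0 + real_of_int j * h)"
      and b="\<lambda>t j. alpha_t t (x0 + real_of_int j * h)", OF this]
  show "(\<Sum>\<^sub>\<infinity>j. (alpha t (x0 + real_of_int j * h) * w t j - alpha_t t (x0 + real_of_int j * h) * v t j) * h)
    = (\<Sum>\<^sub>\<infinity>j. (alpha s (x0 + real_of_int j * h) * w s j - alpha_t s (x0 + real_of_int j * h) * v s j) * h)"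
    by (rule sd_wave_pairing_conserved[OF grid_solution sol])
qed

end
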